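(* Let $F$ be the cdf of a continuous nonnegative random variable with unbounded support $[0,\infty)$, density $f$ and reversed hazard rate $\tilde h=f/F$. Let $\sigma_1,\sigma_2\geq0$, $\lambda_1,\lambda_2>0$, $r_1,r_2\geq0$, and let $n_1,n_2,n_1^*,n_2^*$ be positive integers with $n_1r_1+n_2r_2=1$ and $n_1^*r_1+n_2^*r_2=1$; put $n=n_1+n_2$, $n^*=n_1^*+n_2^*$. Let $U_n$ and $U_{n^*}$ be random variables with cdfs $$F_{U_n}(x)=n_1r_1F\!\left(\tfrac{x-\sigma_1}{\lambda_1}\right)I(x>\sigma_1)+n_2r_2F\!\left(\tfrac{x-\sigma_2}{\lambda_2}\right)I(x>\sigma_2),$$ $$F_{U_{n^*}}(x)=n_1^*r_1F\!\left(\tfrac{x-\sigma_1}{\lambda_1}\right)I(x>\sigma_1)+n_2^*r_2F\!\left(\tfrac{x-\sigma_2}{\lambda_2}\right)I(x>\sigma_2).$$ Suppose either that $F$ is DPRFR and $(\lambda_1,\lambda_2),(\sigma_1,\sigma_2)\in\mathcal{D}_2^+$, or that $F$ is IRFR and $(\lambda_1,\lambda_2),(\sigma_1,\sigma_2)\in\mathcal{E}_2^+$. If $n_1n_2^*\geq n_1^*n_2$, then $U_n\geq_{rh}U_{n^*}$.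
   Context: $I(x>\sigma)$ is $1$ if $x>\sigma$ and $0$ otherwise. $\mathcal{D}_2^+=\{(u_1,u_2):u_1\geq u_2>0\}$, $\mathcal{E}_2^+=\{(u_1,u_2):0<u_1\leq u_2\}$. $F$ is DPRFR (decreasing proportional reversed failure rate) if $x\tilde h(x)$ is decreasing in $x>0$; $F$ is IRFR if $\tilde h(x)$ is increasing in $x>0$. $X\geq_{rh}Y$ means the reversed hazard rate of $X$ is at least that of $Y$ at every $x\geq0$ (equivalently $F_X(x)/F_Y(x)$ is increasing). *)

theory Defs
  imports "HOL-Analysis.Analysis"
begin

definition Ind_gt :: "real \<Rightarrow> real \<Rightarrow> real" where
  "Ind_gt s x = (if x > s then 1 else 0)"

definition rev_hazard :: "(real \<Rightarrow> real) \<Rightarrow> (real \<Rightarrow> real) \<Rightarrow> real \<Rightarrow> real" where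
  "rev_hazard f F x = f x / F x"

definition DPRFR :: "(real \<Rightarrow> real) \<Rightarrow> (real \<Rightarrow> real) \<Rightarrow> bool" where
  "DPRFR f F \<longleftrightarrow> (\<forall>x y. 0 < x \<and> x \<le> y \<longrightarrow> y * rev_hazard f F y \<le> x * rev_hazard f F x)"

definition IRFR :: "(real \<Rightarrow> real) \<Rightarrow> (real \<Rightarrow> real) \<Rightarrow> bool" where
  "IRFR f F \<longleftrightarrow> (\<forall>x y. 0 < x \<and> x \<le> y \<longrightarrow> rev_hazard f F x \<le> rev_hazard f F y)"

definition D2plus :: "(real \<times> real) set" where
  "D2plus = {(u1, u2). u1 \<ge> u2 \<and> u2 > 0}"

definition E2plus :: "(real \<times> real) set" where
  "E2plus = {(u1, u2). 0 < u1 \<and> u1 \<le> u2}"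

text \<open>Reversed hazard rate order between cdfs: F_X / F_Y increasing,
  written without division (F_X(u) F_Y(v) \<le> F_X(v) F_Y(u) for u \<le> v).\<close>
definition rh_ge :: "(real \<Rightarrow> real) \<Rightarrow> (real \<Rightarrow> real) \<Rightarrow> bool" where
  "rh_ge FX FY \<longleftrightarrow> (\<forall>u v. u \<le> v \<longrightarrow> FX u * FY v \<le> FX v * FY u)"

definition cdf_U :: "(real \<Rightarrow> real) \<Rightarrow> nat \<Rightarrow> nat \<Rightarrow> real \<Rightarrow> real \<Rightarrow> real \<Rightarrow> real
    \<Rightarrow> real \<Rightarrow> real \<Rightarrow> real \<Rightarrow> real" where
  "cdf_U F m1 m2 r1 r2 s1 s2 l1 l2 x =
     real m1 * r1 * F ((x - s1) / l1) * Ind_gt s1 x + real m2 * r2 * F ((x - s2) / l2) * Ind_gt s2 x"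

end

theory Submission
  imports Defs
begin

text \<open>Write \<open>G\<^sub>i x = F ((x - \<sigma>\<^sub>i) / \<lambda>\<^sub>i)\<close>. Both cdfs are combinations of
  \<open>G\<^sub>1\<close> and \<open>G\<^sub>2\<close>, and the cross difference
  \<open>F\<^sub>U(v) F\<^sub>U\<^sub>*(u) - F\<^sub>U(u) F\<^sub>U\<^sub>*(v)\<close> factors as
  \<open>r\<^sub>1 r\<^sub>2 (n\<^sub>1 n\<^sub>2\<^sup>* - n\<^sub>1\<^sup>* n\<^sub>2) (G\<^sub>1(v) G\<^sub>2(u) - G\<^sub>1(u) G\<^sub>2(v))\<close>.
  So it suffices that \<open>G\<^sub>1 / G\<^sub>2\<close> increases, i.e. that \<open>h(t\<^sub>2)/\<lambda>\<^sub>2 \<le> h(t\<^sub>1)/\<lambda>\<^sub>1\<close>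
  for \<open>t\<^sub>i = (x - \<sigma>\<^sub>i)/\<lambda>\<^sub>i\<close>. Under DPRFR this follows from \<open>t\<^sub>1 \<le> t\<^sub>2\<close> by writing
  \<open>h(t\<^sub>i)/\<lambda>\<^sub>i = t\<^sub>i h(t\<^sub>i) / (x - \<sigma>\<^sub>i)\<close>.
  The IRFR alternative never occurs: once \<open>h \<ge> c > 0\<close> beyond some point, \<open>ln F\<close>
  grows at least linearly there, contradicting \<open>F < 1\<close> on an unbounded support.\<close>

lemma rh_ge_mixture:
  fixes G1 G2 :: "real \<Rightarrow> real"
  assumes "rh_ge G1 G2" and "b1 * a2 \<le> a1 * b2"
  shows "rh_ge (\<lambda>x. a1 * G1 x + a2 * G2 x) (\<lambda>x. b1 * G1 x + b2 * G2 x)"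
  unfolding rh_ge_def
proof (intro allI impI)
  fix u v :: real
  assume "u \<le> v"
  then have "0 \<le> (a1 * b2 - b1 * a2) * (G1 v * G2 u - G1 u * G2 v)"
    using assms unfolding rh_ge_def by (intro mult_nonneg_nonneg) auto
  then show "(a1 * G1 u + a2 * G2 u) * (b1 * G1 v + b2 * G2 v)
      \<le> (a1 * G1 v + a2 * G2 v) * (b1 * G1 u + b2 * G2 u)"
    by (simp add: algebra_simps)
qed

lemma density_nonzero_if_below_limit:
  fixes F f :: "real \<Rightarrow> real"
  assumes "a > 0" and F_below: "F a < 1"
    and F_lim: "(F \<longlongrightarrow> 1) at_top"
    and f_dens: "\<And>x. x > 0 \<Longrightarrow> (F has_real_derivative f x) (at x)"
  shows "\<exists>x>0. f x \<noteq> 0"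
proof (rule ccontr)
  assume "\<not> (\<exists>x>0. f x \<noteq> 0)"
  then have F'_zero: "(F has_real_derivative 0) (at x)" if "x > 0" for x
    using f_dens[OF that] that by auto
  have "F y = F a" if "y > a" for y
  proof (rule DERIV_isconst_end[OF that])
    show "continuous_on {a..y} F"
      using \<open>a > 0\<close> by (intro continuous_at_imp_continuous_on ballI DERIV_isCont[OF F'_zero]) auto
  qed (use \<open>a > 0\<close> in \<open>intro F'_zero; simp\<close>)
  then have eventually_const: "eventually (\<lambda>y. F y = F a) at_top"
    unfolding eventually_at_top_dense by blast
  from F_lim have "((\<lambda>_::real. F a) \<longlongrightarrow> 1) at_top"
    unfolding tendsto_cong[OF eventually_const] .
  then have "F a = 1"
    by (simp add: tendsto_const_iff)
  with F_below show False
    by simp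
qed

lemma IRFR_imp_density_zero:
  fixes F f :: "real \<Rightarrow> real"
  assumes F_supp: "\<And>x. x > 0 \<Longrightarrow> 0 < F x \<and> F x < 1"
    and f_nonneg: "\<And>x. f x \<ge> 0"
    and f_dens: "\<And>x. x > 0 \<Longrightarrow> (F has_real_derivative f x) (at x)"
    and irfr: "IRFR f F"
    and "x0 > 0"
  shows "f x0 = 0"
proof (rule ccontr)
  assume "f x0 \<noteq> 0"
  define c where "c = rev_hazard f F x0"
  have F_x0: "0 < F x0" "F x0 < 1"
    using F_supp \<open>x0 > 0\<close> by auto
  have "c > 0"
    using f_nonneg[of x0] \<open>f x0 \<noteq> 0\<close> F_x0 unfolding c_def rev_hazard_def by auto
  define g where "g y = ln (F y) - c * y" for y
  define Y where "Y = x0 + (1 - ln (F x0)) / c"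
  have "ln (F x0) < 0"
    using F_x0 by simp
  then have "x0 < Y"
    unfolding Y_def using \<open>c > 0\<close> by simp
  have g': "(g has_real_derivative (f y / F y - c)) (at y)" if "y > 0" for y
    unfolding g_def using F_supp[OF that] f_dens[OF that]
    by (auto intro!: derivative_eq_intros simp: field_simps)
  have "g x0 \<le> g Y"
  proof (rule DERIV_nonneg_imp_increasing_open[OF less_imp_le[OF \<open>x0 < Y\<close>]])
    fix y assume "x0 < y" "y < Y"
    then have "c \<le> f y / F y"
      using irfr \<open>x0 > 0\<close> unfolding IRFR_def c_def rev_hazard_def by auto
    then show "\<exists>d. (g has_real_derivative d) (at y) \<and> d \<ge> 0"
      using g'[of y] \<open>x0 < y\<close> \<open>x0 > 0\<close> by auto
  next
    show "continuous_on {x0..Y} g"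
      using \<open>x0 > 0\<close> by (intro continuous_at_imp_continuous_on ballI DERIV_isCont[OF g']) auto
  qed
  moreover have "c * Y = c * x0 + 1 - ln (F x0)"
    unfolding Y_def using \<open>c > 0\<close> by (simp add: field_simps)
  ultimately have "ln (F Y) \<ge> 1"
    unfolding g_def by linarith
  moreover have "ln (F Y) < 0"
    using F_supp[of Y] \<open>x0 < Y\<close> \<open>x0 > 0\<close> by simp
  ultimately show False
    by linarith
qed

lemma DERIV_ln_cdf_affine:
  fixes F f :: "real \<Rightarrow> real"
  assumes F_pos: "\<And>x. x > 0 \<Longrightarrow> 0 < F x"
    and f_dens: "\<And>x. x > 0 \<Longrightarrow> (F has_real_derivative f x) (at x)"
    and "l > 0" "x > s"
  shows "((\<lambda>x. ln (F ((x - s) / l))) has_real_derivative rev_hazard f F ((x - s) / l) / l) (at x)"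
proof -
  have t_pos: "(x - s) / l > 0"
    using assms by simp
  have "((\<lambda>x. (x - s) / l) has_real_derivative 1 / l) (at x)"
    using \<open>l > 0\<close> by (auto intro!: derivative_eq_intros)
  from DERIV_chain2[OF f_dens[OF t_pos] this]
  have "((\<lambda>x. F ((x - s) / l)) has_real_derivative f ((x - s) / l) * (1 / l)) (at x)" .
  from DERIV_chain2[OF DERIV_ln_divide this] F_pos[OF t_pos]
  show ?thesis
    by (simp add: rev_hazard_def)
qed

lemma DPRFR_scaled_rev_hazard_le:
  fixes F f :: "real \<Rightarrow> real"
  assumes F_pos: "\<And>x. x > 0 \<Longrightarrow> 0 < F x"
    and f_nonneg: "\<And>x. f x \<ge> 0"
    and dprfr: "DPRFR f F"
    and l: "l2 \<le> l1" "0 < l2" and s: "s2 \<le> s1"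
    and "x > s1"
  shows "rev_hazard f F ((x - s2) / l2) / l2 \<le> rev_hazard f F ((x - s1) / l1) / l1"
proof -
  define t1 where "t1 = (x - s1) / l1"
  define t2 where "t2 = (x - s2) / l2"
  have "t1 > 0"
    using \<open>x > s1\<close> l unfolding t1_def by simp
  have "(x - s1) * l2 \<le> (x - s2) * l1"
    using l s \<open>x > s1\<close> by (intro mult_mono) auto
  then have "t1 \<le> t2"
    unfolding t1_def t2_def using l by (simp add: field_simps)
  then have "t2 * rev_hazard f F t2 \<le> t1 * rev_hazard f F t1"
    using dprfr \<open>t1 > 0\<close> unfolding DPRFR_def by auto
  have h_nonneg: "rev_hazard f F t1 \<ge> 0"
    unfolding rev_hazard_def using f_nonneg F_pos[OF \<open>t1 > 0\<close>] by simp
  have "rev_hazard f F t2 / l2 = t2 * rev_hazard f F t2 / (x - s2)"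
    unfolding t2_def using l s \<open>x > s1\<close> by (simp add: field_simps)
  also have "\<dots> \<le> t1 * rev_hazard f F t1 / (x - s2)"
    using \<open>t2 * rev_hazard f F t2 \<le> t1 * rev_hazard f F t1\<close> s \<open>x > s1\<close>
    by (intro divide_right_mono) auto
  also have "\<dots> \<le> t1 * rev_hazard f F t1 / (x - s1)"
    using s \<open>x > s1\<close> \<open>t1 > 0\<close> h_nonneg by (intro divide_left_mono) auto
  also have "\<dots> = rev_hazard f F t1 / l1"
    unfolding t1_def using l \<open>x > s1\<close> by (simp add: field_simps)
  finally show ?thesis
    unfolding t1_def t2_def .
qed

lemma DPRFR_rh_ge_location_scale:
  fixes F f :: "real \<Rightarrow> real"
  assumes F_zero: "\<And>x. x \<le> 0 \<Longrightarrow> F x = 0"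
    and F_pos: "\<And>x. x > 0 \<Longrightarrow> 0 < F x"
    and f_nonneg: "\<And>x. f x \<ge> 0"
    and f_dens: "\<And>x. x > 0 \<Longrightarrow> (F has_real_derivative f x) (at x)"
    and dprfr: "DPRFR f F"
    and l: "l2 \<le> l1" "0 < l2" and s: "s2 \<le> s1"
  shows "rh_ge (\<lambda>x. F ((x - s1) / l1)) (\<lambda>x. F ((x - s2) / l2))"
  unfolding rh_ge_def
proof (intro allI impI)
  fix u v :: real
  assume "u \<le> v"
  have F_nonneg: "F x \<ge> 0" for x
    using F_zero F_pos by (metis less_eq_real_def not_le)
  show "F ((u - s1) / l1) * F ((v - s2) / l2) \<le> F ((v - s1) / l1) * F ((u - s2) / l2)"
  proof (cases "u \<le> s1")
    case True
    then have "F ((u - s1) / l1) = 0"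
      using l by (intro F_zero) (simp add: divide_nonpos_pos)
    then show ?thesis
      using F_nonneg by simp
  next
    case False
    define H where "H x = ln (F ((x - s1) / l1)) - ln (F ((x - s2) / l2))" for x
    have H': "(H has_real_derivative
        rev_hazard f F ((x - s1) / l1) / l1 - rev_hazard f F ((x - s2) / l2) / l2) (at x)"
      if "x > s1" for x
      unfolding H_def using that l s
      by (intro DERIV_diff DERIV_ln_cdf_affine[OF F_pos f_dens]) auto
    have "H u \<le> H v"
    proof (rule DERIV_nonneg_imp_increasing_open[OF \<open>u \<le> v\<close>])
      fix x assume "u < x" "x < v"
      then show "\<exists>d. (H has_real_derivative d) (at x) \<and> 0 \<le> d"
        using H'[of x] DPRFR_scaled_rev_hazard_le[OF F_pos f_nonneg dprfr l s, of x] False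
        by auto
    next
      show "continuous_on {u..v} H"
        using False by (intro continuous_at_imp_continuous_on ballI DERIV_isCont[OF H']) auto
    qed
    moreover have F_pos_uv: "F ((u - s1) / l1) > 0" "F ((v - s1) / l1) > 0"
        "F ((u - s2) / l2) > 0" "F ((v - s2) / l2) > 0"
      using F_pos False \<open>u \<le> v\<close> l s by auto
    ultimately have "ln (F ((u - s1) / l1) * F ((v - s2) / l2))
        \<le> ln (F ((v - s1) / l1) * F ((u - s2) / l2))"
      unfolding H_def by (simp add: ln_mult)
    then show ?thesis
      using F_pos_uv by simp
  qed
qed

lemma cdf_U_eq_mixture:
  fixes F :: "real \<Rightarrow> real"
  assumes "\<And>x. x \<le> 0 \<Longrightarrow> F x = 0" and "l1 > 0" "l2 > 0"
  shows "cdf_U F m1 m2 r1 r2 s1 s2 l1 l2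
      = (\<lambda>x. (m1 * r1) * F ((x - s1) / l1) + (m2 * r2) * F ((x - s2) / l2))"
  using assms by (auto simp: fun_eq_iff cdf_U_def Ind_gt_def divide_nonpos_pos)

theorem theorem4p4:
  fixes F f :: "real \<Rightarrow> real"
    and s1 s2 l1 l2 r1 r2 :: real
    and n1 n2 n1' n2' :: nat
  assumes F_cont: "continuous_on UNIV F"
    and F_mono: "mono F"
    and F_zero: "\<And>x. x \<le> 0 \<Longrightarrow> F x = 0"
    and F_supp: "\<And>x. x > 0 \<Longrightarrow> 0 < F x \<and> F x < 1"
    and F_lim: "(F \<longlongrightarrow> 1) at_top"
    and f_nonneg: "\<And>x. f x \<ge> 0"
    and f_dens: "\<And>x. x > 0 \<Longrightarrow> (F has_real_derivative f x) (at x)"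
    and s_nonneg: "s1 \<ge> 0" "s2 \<ge> 0"
    and l_pos: "l1 > 0" "l2 > 0"
    and r_nonneg: "r1 \<ge> 0" "r2 \<ge> 0"
    and n_pos: "n1 > 0" "n2 > 0" "n1' > 0" "n2' > 0"
    and sum1: "real n1 * r1 + real n2 * r2 = 1"
    and sum2: "real n1' * r1 + real n2' * r2 = 1"
    and cases: "(DPRFR f F \<and> (l1, l2) \<in> D2plus \<and> (s1, s2) \<in> D2plus)
              \<or> (IRFR f F \<and> (l1, l2) \<in> E2plus \<and> (s1, s2) \<in> E2plus)"
    and ncond: "n1 * n2' \<ge> n1' * n2"
  shows "rh_ge (cdf_U F n1 n2 r1 r2 s1 s2 l1 l2) (cdf_U F n1' n2' r1 r2 s1 s2 l1 l2)"
proof -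
  obtain x0 where "x0 > 0" "f x0 \<noteq> 0"
    using density_nonzero_if_below_limit[OF zero_less_one _ F_lim f_dens] F_supp[of 1] by auto
  then have "\<not> IRFR f F"
    using IRFR_imp_density_zero[OF F_supp f_nonneg f_dens] by blast
  with cases have "DPRFR f F" "l2 \<le> l1" "s2 \<le> s1"
    unfolding D2plus_def by auto
  then have G_rh: "rh_ge (\<lambda>x. F ((x - s1) / l1)) (\<lambda>x. F ((x - s2) / l2))"
    using F_supp l_pos by (intro DPRFR_rh_ge_location_scale[OF F_zero _ f_nonneg f_dens]) auto
  have "real n1' * real n2 \<le> real n1 * real n2'"
    using ncond by (metis of_nat_le_iff of_nat_mult)
  from mult_left_mono[OF this mult_nonneg_nonneg[OF r_nonneg]]
  have "(n1' * r1) * (n2 * r2) \<le> (n1 * r1) * (n2' * r2)"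
    by (simp add: algebra_simps)
  from rh_ge_mixture[OF G_rh this] show ?thesis
    using F_zero l_pos by (simp only: cdf_U_eq_mixture)
qed

end
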